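(* Let $\sigma>0$ and $h:[0,\sigma)\to\mathbb{R}^+$ be continuous, strictly increasing, with $\lim_{s\to\sigma^-}h(s)=+\infty$, and suppose there exists $\gamma\in[1,2)$ with $\lim_{s\to\sigma^-}(\sigma-s)^\gamma h(s)=C>0$. Let $H(s)=\int_0^s h(t)\,dt$, $\psi(s)=\int_0^s e^{-H(t)}\,dt$ for $s\in[0,\sigma]$, $L=\psi(\sigma)$ (so $\psi:[0,\sigma]\to[0,L]$ is increasing and invertible), and $g(s)=e^{-H(\psi^{-1}(s))}$ for $s\in[0,L]$ (with $g(L)=0$). Then: (i) $g(0)=1$ and $g(L)=0$; (ii) $g$ is decreasing; (iii) $\lim_{s\to L^-}g'(s)=-\infty$; (iv) $\displaystyle\int_0^L\frac{dt}{\sqrt{\int_t^L g(s)\,ds}}<+\infty.$ *)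

theory Defs
  imports "HOL-Analysis.Analysis"
begin

definition bigH :: "(real \<Rightarrow> real) \<Rightarrow> real \<Rightarrow> real" where
  "bigH h s = integral {0..s} h"

definition psi :: "(real \<Rightarrow> real) \<Rightarrow> real \<Rightarrow> real" where
  "psi h s = integral {0..s} (\<lambda>t. exp (- bigH h t))"

definition bigL :: "(real \<Rightarrow> real) \<Rightarrow> real \<Rightarrow> real" where
  "bigL h \<sigma> = psi h \<sigma>"

definition gfun :: "(real \<Rightarrow> real) \<Rightarrow> real \<Rightarrow> real \<Rightarrow> real" where
  "gfun h \<sigma> s = (if s = bigL h \<sigma> then 0
                   else exp (- bigH h (the_inv_into {0..\<sigma>} (psi h) s)))"

end

theory Submission
  imports Defs
begin

(* Since g = exp (- H) o psi^-1 and psi' = exp (- H), we have g' = - h o psi^-1, which tends to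
   -infinity because psi^-1 t tends to sigma as t tends to L.  For (iv), put t = psi v: the tail
   integral of g from psi v to L is at least the integral of exp (- 2 H) over [v, v + d^gamma / 2],
   where d = sigma - v.  Because (sigma - s)^gamma h s is bounded near sigma, H grows by at most a
   constant on that interval, so the tail is of order d^gamma exp (- 2 H v).  Hence
   1 / sqrt (tail t) is bounded by a multiple of d^(-gamma/2) exp (H v), which is the
   t-derivative of a multiple of -d^(1 - gamma/2), and this is integrable because gamma < 2. *)

lemma has_real_derivative_indefinite_integral:
  fixes f :: "real \<Rightarrow> real"
  assumes "continuous_on {a..b} f" "a < s" "s < b"
  shows "((\<lambda>x. integral {a..x} f) has_real_derivative f s) (at s)"
proof -
  have "((\<lambda>x. integral {a..x} f) has_real_derivative f s) (at s within {a..b})"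
    using assms by (intro integral_has_real_derivative) auto
  moreover have "at s within {a..b} = at s"
    using assms by (intro at_within_Icc_at) auto
  ultimately show ?thesis by simp
qed

lemma integrable_on_Icc_if_dominated_on_open:
  fixes f g :: "real \<Rightarrow> real"
  assumes "continuous_on {a<..<b} f" "g integrable_on {a..b}"
    and "\<And>x. x \<in> {a<..<b} \<Longrightarrow> \<bar>f x\<bar> \<le> g x"
  shows "f integrable_on {a..b}"
proof -
  have "f integrable_on {a<..<b}"
  proof (rule measurable_bounded_by_integrable_imp_integrable_real)
    show "f \<in> borel_measurable (lebesgue_on {a<..<b})"
      using assms(1) by (rule continuous_imp_measurable_on_sets_lebesgue) auto
    show "g integrable_on {a<..<b}"
      using assms(2) integrable_on_open_interval_real by blast
  qed (use assms(3) in auto)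
  then show ?thesis
    using integrable_on_open_interval_real by blast
qed

lemma eventually_at_left_Ico_witness:
  fixes a b :: real
  assumes "eventually P (at_left b)" "a < b"
  obtains c where "a < c" "c < b" "\<And>s. c \<le> s \<Longrightarrow> s < b \<Longrightarrow> P s"
proof -
  obtain b' where "b' < b" and P: "\<And>s. b' < s \<Longrightarrow> s < b \<Longrightarrow> P s"
    using assms eventually_at_left[of a b] by auto
  show thesis
    by (rule that[of "(max a b' + b) / 2"]) (use \<open>a < b\<close> \<open>b' < b\<close> P in auto)
qed

locale increasing_rate =
  fixes h :: "real \<Rightarrow> real" and \<sigma> :: real
  assumes sigma_pos: "0 < \<sigma>"
    and h_cont: "continuous_on {0..<\<sigma>} h"
    and h_pos: "\<And>s. 0 \<le> s \<Longrightarrow> s < \<sigma> \<Longrightarrow> 0 < h s"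
    and h_mono: "mono_on {0..<\<sigma>} h"
begin

lemma h_integrable: "0 \<le> a \<Longrightarrow> b < \<sigma> \<Longrightarrow> h integrable_on {a..b}"
  by (rule integrable_continuous_real, rule continuous_on_subset[OF h_cont]) auto

lemma bigH_0 [simp]: "bigH h 0 = 0"
  by (simp add: bigH_def)

lemma bigH_split:
  assumes "0 \<le> a" "a \<le> b" "b < \<sigma>"
  shows "bigH h b = bigH h a + integral {a..b} h"
  unfolding bigH_def
  using Henstock_Kurzweil_Integration.integral_combine[of 0 a b h] h_integrable[of 0 b] assms
  by auto

lemma bigH_mono:
  assumes "0 \<le> a" "a \<le> b" "b < \<sigma>"
  shows "bigH h a \<le> bigH h b"
proof -
  have "0 \<le> integral {a..b} h"
    using h_integrable h_pos assms by (intro integral_nonneg) (auto intro: less_imp_le)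
  then show ?thesis
    using bigH_split[OF assms] by simp
qed

lemma bigH_increment_le:
  assumes "0 \<le> a" "a \<le> b" "b < \<sigma>"
  shows "bigH h b - bigH h a \<le> (b - a) * h b"
proof -
  have "integral {a..b} h \<le> integral {a..b} (\<lambda>_. h b)"
    using h_integrable assms by (intro integral_le) (auto intro!: mono_onD[OF h_mono])
  then show ?thesis
    using bigH_split[OF assms] assms by simp
qed

lemma bigH_nonneg: "0 \<le> a \<Longrightarrow> a < \<sigma> \<Longrightarrow> 0 \<le> bigH h a"
  using bigH_mono[of 0 a] by simp

lemma continuous_on_bigH: "b < \<sigma> \<Longrightarrow> continuous_on {0..b} (bigH h)"
  unfolding bigH_def[abs_def] by (rule indefinite_integral_continuous_1[OF h_integrable]) auto

lemma has_real_derivative_bigH: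
  assumes "0 < s" "s < \<sigma>"
  shows "(bigH h has_real_derivative h s) (at s)"
  unfolding bigH_def[abs_def] using assms
  by (intro has_real_derivative_indefinite_integral[where b = "(s + \<sigma>) / 2"]
      continuous_on_subset[OF h_cont]) auto

lemma exp_minus_bigH_integrable: "(\<lambda>t. exp (- bigH h t)) integrable_on {0..\<sigma>}"
proof (rule integrable_on_Icc_if_dominated_on_open[where g = "\<lambda>_. 1"])
  have "isCont (\<lambda>t. exp (- bigH h t)) t" if "t \<in> {0<..<\<sigma>}" for t
    using that has_real_derivative_bigH DERIV_isCont by (auto intro!: continuous_intros)
  then show "continuous_on {0<..<\<sigma>} (\<lambda>t. exp (- bigH h t))"
    by (intro continuous_at_imp_continuous_on) blast
  show "\<bar>exp (- bigH h t)\<bar> \<le> 1" if "t \<in> {0<..<\<sigma>}" for t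
    using that bigH_nonneg[of t] by simp
qed (rule integrable_const_ivl)

lemma psi_diff:
  assumes "0 \<le> a" "a \<le> b" "b \<le> \<sigma>"
  shows "psi h b - psi h a = integral {a..b} (\<lambda>t. exp (- bigH h t))"
  unfolding psi_def
  using Henstock_Kurzweil_Integration.integral_combine[of 0 a b "\<lambda>t. exp (- bigH h t)"]
    integrable_on_subinterval[OF exp_minus_bigH_integrable, of 0 b] assms
  by auto

lemma psi_0 [simp]: "psi h 0 = 0"
  by (simp add: psi_def)

lemma psi_increment_ge:
  assumes "0 \<le> a" "a \<le> b" "b < \<sigma>"
  shows "(b - a) * exp (- bigH h b) \<le> psi h b - psi h a"
proof -
  have "integral {a..b} (\<lambda>_. exp (- bigH h b)) \<le> integral {a..b} (\<lambda>t. exp (- bigH h t))"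
    using assms bigH_mono[of _ b]
    by (intro integral_le integrable_on_subinterval[OF exp_minus_bigH_integrable]) auto
  then show ?thesis
    using psi_diff[of a b] assms by simp
qed

lemma strict_mono_on_psi: "strict_mono_on {0..\<sigma>} (psi h)"
proof (rule strict_mono_onI)
  fix a b assume ab: "a \<in> {0..\<sigma>}" "b \<in> {0..\<sigma>}" "a < b"
  define c where "c = (a + b) / 2"
  have "0 < (c - a) * exp (- bigH h c)"
    using ab c_def by simp
  also have "\<dots> \<le> psi h c - psi h a"
    using ab c_def by (intro psi_increment_ge) auto
  finally have "psi h a < psi h c" by simp
  moreover have "0 \<le> integral {c..b} (\<lambda>t. exp (- bigH h t))"
    using ab c_def by (intro integral_nonneg integrable_on_subinterval[OF exp_minus_bigH_integrable]) auto
  ultimately show "psi h a < psi h b"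
    using psi_diff[of c b] ab c_def by simp
qed

lemma psi_mono: "0 \<le> a \<Longrightarrow> a \<le> b \<Longrightarrow> b \<le> \<sigma> \<Longrightarrow> psi h a \<le> psi h b"
  by (rule strict_mono_on_leD[OF strict_mono_on_psi]) auto

lemma bigL_pos: "0 < bigL h \<sigma>"
  using strict_mono_onD[OF strict_mono_on_psi, of 0 \<sigma>] sigma_pos by (simp add: bigL_def)

lemma continuous_on_psi: "continuous_on {0..\<sigma>} (psi h)"
  unfolding psi_def[abs_def] by (rule indefinite_integral_continuous_1[OF exp_minus_bigH_integrable])

lemma has_real_derivative_psi:
  assumes "0 < s" "s < \<sigma>"
  shows "(psi h has_real_derivative exp (- bigH h s)) (at s)"
  unfolding psi_def[abs_def] using assms continuous_on_bigH[of "(s + \<sigma>) / 2"]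
  by (intro has_real_derivative_indefinite_integral[where b = "(s + \<sigma>) / 2"])
     (auto intro!: continuous_intros)

lemma psi_image: "psi h ` {0..\<sigma>} = {0..bigL h \<sigma>}"
proof
  show "psi h ` {0..\<sigma>} \<subseteq> {0..bigL h \<sigma>}"
    using psi_mono[of 0] psi_mono[of _ \<sigma>] by (auto simp: bigL_def)
  show "{0..bigL h \<sigma>} \<subseteq> psi h ` {0..\<sigma>}"
    using IVT'[of "psi h" 0 _ \<sigma>] continuous_on_psi sigma_pos by (force simp: bigL_def)
qed

abbreviation psi_inv :: "real \<Rightarrow> real" where
  "psi_inv \<equiv> the_inv_into {0..\<sigma>} (psi h)"

lemma psi_inv_psi: "v \<in> {0..\<sigma>} \<Longrightarrow> psi_inv (psi h v) = v"
  by (rule the_inv_into_f_f[OF strict_mono_on_imp_inj_on[OF strict_mono_on_psi]])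

lemma psi_psi_inv: "s \<in> {0..bigL h \<sigma>} \<Longrightarrow> psi h (psi_inv s) = s"
  by (rule f_the_inv_into_f[OF strict_mono_on_imp_inj_on[OF strict_mono_on_psi]])
     (simp add: psi_image)

lemma psi_inv_in: "s \<in> {0..bigL h \<sigma>} \<Longrightarrow> psi_inv s \<in> {0..\<sigma>}"
  by (rule the_inv_into_into[OF strict_mono_on_imp_inj_on[OF strict_mono_on_psi]])
     (auto simp: psi_image)

lemma psi_inv_0 [simp]: "psi_inv 0 = 0"
  using psi_inv_psi[of 0] sigma_pos by simp

lemma psi_inv_bigL [simp]: "psi_inv (bigL h \<sigma>) = \<sigma>"
  using psi_inv_psi[of \<sigma>] sigma_pos by (simp add: bigL_def)

lemma psi_inv_less_sigma:
  assumes "0 \<le> s" "s < bigL h \<sigma>"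
  shows "psi_inv s < \<sigma>"
proof -
  have "psi_inv s \<noteq> \<sigma>"
    using psi_psi_inv[of s] assms by (auto simp: bigL_def)
  then show ?thesis
    using psi_inv_in[of s] assms by auto
qed

lemma psi_inv_pos:
  assumes "0 < s" "s \<le> bigL h \<sigma>"
  shows "0 < psi_inv s"
proof -
  have "psi_inv s \<noteq> 0"
    using psi_psi_inv[of s] assms by auto
  then show ?thesis
    using psi_inv_in[of s] assms by auto
qed

lemma psi_inv_mono:
  assumes "0 \<le> s" "s \<le> t" "t \<le> bigL h \<sigma>"
  shows "psi_inv s \<le> psi_inv t"
proof (rule ccontr)
  assume "\<not> psi_inv s \<le> psi_inv t"
  then have "psi h (psi_inv t) < psi h (psi_inv s)"
    using assms psi_inv_in[of s] psi_inv_in[of t] by (intro strict_mono_onD[OF strict_mono_on_psi]) auto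
  then show False
    using assms psi_psi_inv[of s] psi_psi_inv[of t] by simp
qed

lemma continuous_on_psi_inv: "continuous_on {0..bigL h \<sigma>} psi_inv"
  using continuous_on_inv[OF continuous_on_psi, of psi_inv] psi_inv_psi psi_image by auto

lemma has_real_derivative_psi_inv:
  assumes "0 < s" "s < bigL h \<sigma>"
  shows "(psi_inv has_real_derivative exp (bigH h (psi_inv s))) (at s)"
proof -
  have "(psi_inv has_real_derivative inverse (exp (- bigH h (psi_inv s)))) (at s)"
  proof (rule DERIV_inverse_function[where f = "psi h" and a = 0 and b = "bigL h \<sigma>"])
    show "(psi h has_real_derivative exp (- bigH h (psi_inv s))) (at (psi_inv s))"
      using assms psi_inv_pos psi_inv_less_sigma by (intro has_real_derivative_psi) auto
    show "isCont psi_inv s"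
      using continuous_on_interior[OF continuous_on_psi_inv, of s] assms by auto
  qed (use assms psi_psi_inv in auto)
  then show ?thesis
    by (simp add: exp_minus)
qed

lemma psi_inv_tendsto_sigma: "filterlim psi_inv (at_left \<sigma>) (at_left (bigL h \<sigma>))"
proof (rule tendsto_imp_filterlim_at_left)
  have "bigL h \<sigma> \<in> {0..bigL h \<sigma>}"
    using bigL_pos by simp
  then have "(psi_inv \<longlongrightarrow> \<sigma>) (at (bigL h \<sigma>) within {0..bigL h \<sigma>})"
    using continuous_on_psi_inv unfolding continuous_on_def by fastforce
  moreover have "at (bigL h \<sigma>) within {0..bigL h \<sigma>} = at_left (bigL h \<sigma>)"
    using bigL_pos by (intro at_within_nhd[where S = "{0<..}"]) auto
  ultimately show "(psi_inv \<longlongrightarrow> \<sigma>) (at_left (bigL h \<sigma>))"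
    by simp
  show "eventually (\<lambda>s. psi_inv s < \<sigma>) (at_left (bigL h \<sigma>))"
    using eventually_at_left_real[OF bigL_pos] by eventually_elim (simp add: psi_inv_less_sigma)
qed

lemma gfun_eq: "0 \<le> s \<Longrightarrow> s < bigL h \<sigma> \<Longrightarrow> gfun h \<sigma> s = exp (- bigH h (psi_inv s))"
  by (simp add: gfun_def)

lemma gfun_psi: "0 \<le> v \<Longrightarrow> v < \<sigma> \<Longrightarrow> gfun h \<sigma> (psi h v) = exp (- bigH h v)"
  using gfun_eq[of "psi h v"] psi_inv_psi[of v] psi_mono[of 0 v] strict_mono_onD[OF strict_mono_on_psi, of v \<sigma>]
  by (simp add: bigL_def)

lemma gfun_0: "gfun h \<sigma> 0 = 1"
  using gfun_eq[of 0] bigL_pos by simp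

lemma gfun_bigL: "gfun h \<sigma> (bigL h \<sigma>) = 0"
  by (simp add: gfun_def)

lemma gfun_nonneg: "0 \<le> gfun h \<sigma> s"
  by (simp add: gfun_def)

lemma gfun_antimono:
  assumes "0 \<le> s" "s \<le> t" "t \<le> bigL h \<sigma>"
  shows "gfun h \<sigma> t \<le> gfun h \<sigma> s"
proof (cases "t = bigL h \<sigma>")
  case True
  then show ?thesis
    using gfun_bigL gfun_nonneg by simp
next
  case False
  then have "bigH h (psi_inv s) \<le> bigH h (psi_inv t)"
    using assms psi_inv_in[of s] psi_inv_mono psi_inv_less_sigma[of t] by (intro bigH_mono) auto
  then show ?thesis
    using assms False gfun_eq[of s] gfun_eq[of t] by simp
qed

lemma gfun_le_1: "0 \<le> s \<Longrightarrow> s \<le> bigL h \<sigma> \<Longrightarrow> gfun h \<sigma> s \<le> 1"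
  using gfun_antimono[of 0 s] gfun_0 by simp

lemma has_real_derivative_gfun:
  assumes "0 < s" "s < bigL h \<sigma>"
  shows "(gfun h \<sigma> has_real_derivative - h (psi_inv s)) (at s)"
proof (rule has_field_derivative_transform_within_open[where S = "{0<..<bigL h \<sigma>}"])
  have "0 < psi_inv s" "psi_inv s < \<sigma>"
    using assms psi_inv_pos psi_inv_less_sigma by auto
  then have "((\<lambda>s. exp (- bigH h (psi_inv s))) has_real_derivative
      exp (- bigH h (psi_inv s)) * - (h (psi_inv s) * exp (bigH h (psi_inv s)))) (at s)"
    by (intro DERIV_chain2[OF DERIV_exp] DERIV_minus
        DERIV_chain2[OF has_real_derivative_bigH has_real_derivative_psi_inv[OF assms]])
  then show "((\<lambda>s. exp (- bigH h (psi_inv s))) has_real_derivative - h (psi_inv s)) (at s)"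
    by (simp add: exp_minus field_simps)
qed (use assms gfun_eq in auto)

lemma deriv_gfun_tendsto_at_bot:
  assumes "filterlim h at_top (at_left \<sigma>)"
  shows "filterlim (deriv (gfun h \<sigma>)) at_bot (at_left (bigL h \<sigma>))"
proof -
  have "filterlim (\<lambda>s. - h (psi_inv s)) at_bot (at_left (bigL h \<sigma>))"
    using filterlim_compose[OF assms psi_inv_tendsto_sigma] by (simp add: filterlim_uminus_at_top)
  moreover have "eventually (\<lambda>s. - h (psi_inv s) = deriv (gfun h \<sigma>) s) (at_left (bigL h \<sigma>))"
    using eventually_at_left_real[OF bigL_pos]
    by eventually_elim (auto intro: DERIV_imp_deriv[symmetric] has_real_derivative_gfun)
  ultimately show ?thesis
    using filterlim_cong by fastforce
qed

lemma gfun_integrable: "gfun h \<sigma> integrable_on {0..bigL h \<sigma>}"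
proof (rule integrable_on_Icc_if_dominated_on_open[where g = "\<lambda>_. 1"])
  have "isCont (gfun h \<sigma>) s" if "s \<in> {0<..<bigL h \<sigma>}" for s
    using that has_real_derivative_gfun DERIV_isCont by auto
  then show "continuous_on {0<..<bigL h \<sigma>} (gfun h \<sigma>)"
    by (intro continuous_at_imp_continuous_on) blast
  show "\<bar>gfun h \<sigma> s\<bar> \<le> 1" if "s \<in> {0<..<bigL h \<sigma>}" for s
    using that gfun_le_1[of s] gfun_nonneg[of s] by simp
qed (rule integrable_const_ivl)

definition tail :: "real \<Rightarrow> real" where
  "tail t = integral {t..bigL h \<sigma>} (gfun h \<sigma>)"

lemma tail_split:
  assumes "0 \<le> s" "s \<le> t" "t \<le> bigL h \<sigma>"
  shows "tail s = integral {s..t} (gfun h \<sigma>) + tail t"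
  unfolding tail_def using assms
  by (intro Henstock_Kurzweil_Integration.integral_combine[symmetric]
      integrable_on_subinterval[OF gfun_integrable]) auto

lemma integral_gfun_nonneg:
  "0 \<le> s \<Longrightarrow> t \<le> bigL h \<sigma> \<Longrightarrow> 0 \<le> integral {s..t} (gfun h \<sigma>)"
  using gfun_nonneg by (auto intro!: integral_nonneg integrable_on_subinterval[OF gfun_integrable])

lemma tail_nonneg: "0 \<le> t \<Longrightarrow> 0 \<le> tail t"
  unfolding tail_def by (rule integral_gfun_nonneg) auto

lemma tail_antimono: "0 \<le> s \<Longrightarrow> s \<le> t \<Longrightarrow> t \<le> bigL h \<sigma> \<Longrightarrow> tail t \<le> tail s"
  using tail_split integral_gfun_nonneg by fastforce

lemma continuous_on_tail: "continuous_on {0..bigL h \<sigma>} tail"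
  unfolding tail_def[abs_def] by (rule indefinite_integral_continuous_1'[OF gfun_integrable])

lemma tail_psi_ge:
  assumes "0 \<le> v" "v \<le> w" "w < \<sigma>"
  shows "(w - v) * exp (- bigH h w) ^ 2 \<le> tail (psi h v)"
proof -
  have w: "psi h v \<le> psi h w" "psi h w \<le> bigL h \<sigma>" "0 \<le> psi h v"
    using assms psi_mono[of 0 v] psi_mono[of v w] psi_mono[of w \<sigma>] by (auto simp: bigL_def)
  have "(w - v) * exp (- bigH h w) ^ 2 \<le> (psi h w - psi h v) * exp (- bigH h w)"
    using psi_increment_ge[OF assms] by (simp add: power2_eq_square)
  also have "\<dots> = integral {psi h v..psi h w} (\<lambda>_. gfun h \<sigma> (psi h w))"
    using w assms gfun_psi by simp
  also have "\<dots> \<le> integral {psi h v..psi h w} (gfun h \<sigma>)"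
    using w by (intro integral_le integrable_on_subinterval[OF gfun_integrable] gfun_antimono) auto
  also have "\<dots> \<le> tail (psi h v)"
    using tail_split[of "psi h v" "psi h w"] tail_nonneg[of "psi h w"] w by simp
  finally show ?thesis .
qed

lemma tail_pos:
  assumes "0 \<le> t" "t < bigL h \<sigma>"
  shows "0 < tail t"
proof -
  define v where "v = psi_inv t"
  have v: "0 \<le> v" "v < \<sigma>" "psi h v = t"
    using assms psi_inv_in[of t] psi_inv_less_sigma[of t] psi_psi_inv[of t] by (auto simp: v_def)
  have "0 < ((v + \<sigma>) / 2 - v) * exp (- bigH h ((v + \<sigma>) / 2)) ^ 2"
    using v by simp
  also have "\<dots> \<le> tail t"
    using tail_psi_ge[of v "(v + \<sigma>) / 2"] v by simp
  finally show ?thesis .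
qed

lemma bigH_increment_near_sigma:
  assumes "1 \<le> \<gamma>" "\<gamma> \<le> 2" "0 \<le> v" "v < \<sigma>" "\<sigma> - v \<le> 1"
    and bound: "\<And>s. v \<le> s \<Longrightarrow> s < \<sigma> \<Longrightarrow> (\<sigma> - s) powr \<gamma> * h s \<le> M"
  defines "w \<equiv> v + (\<sigma> - v) powr \<gamma> / 2"
  shows "v \<le> w" "w < \<sigma>" "bigH h w \<le> bigH h v + 2 * M"
proof -
  define d where "d = \<sigma> - v"
  have d: "0 < d" "d \<le> 1" "w = v + d powr \<gamma> / 2"
    using assms by (auto simp: d_def w_def)
  have "d powr \<gamma> \<le> d"
    using powr_mono'[of 1 \<gamma> d] d assms by simp
  then have dw: "d \<le> 2 * (\<sigma> - w)"
    using d by (simp add: d_def)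
  show "v \<le> w" "w < \<sigma>"
    using d dw by auto
  have "d powr \<gamma> \<le> (2 * (\<sigma> - w)) powr \<gamma>"
    using d(1) dw assms(1) by (intro powr_mono2) auto
  also have "\<dots> = 2 powr \<gamma> * (\<sigma> - w) powr \<gamma>"
    by (rule powr_mult)
  also have "\<dots> \<le> 4 * (\<sigma> - w) powr \<gamma>"
    using powr_mono[of \<gamma> 2 2] assms(2) by (intro mult_right_mono) (auto simp: powr_numeral)
  finally have "d powr \<gamma> / 2 * h w \<le> 2 * ((\<sigma> - w) powr \<gamma> * h w)"
    using h_pos[of w] \<open>v \<le> w\<close> \<open>w < \<sigma>\<close> assms(3) mult_right_mono by fastforce
  also have "\<dots> \<le> 2 * M"
    using bound \<open>v \<le> w\<close> \<open>w < \<sigma>\<close> by simp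
  finally show "bigH h w \<le> bigH h v + 2 * M"
    using bigH_increment_le[of v w] \<open>v \<le> w\<close> \<open>w < \<sigma>\<close> assms(3) d(3) by simp
qed

lemma inverse_sqrt_tail_near_sigma:
  assumes "1 \<le> \<gamma>" "\<gamma> \<le> 2" "0 \<le> v" "v < \<sigma>" "\<sigma> - v \<le> 1"
    and "\<And>s. v \<le> s \<Longrightarrow> s < \<sigma> \<Longrightarrow> (\<sigma> - s) powr \<gamma> * h s \<le> M"
  shows "1 / sqrt (tail (psi h v))
    \<le> sqrt 2 * exp (2 * M) * ((\<sigma> - v) powr (- \<gamma> / 2) * exp (bigH h v))"
proof -
  define \<delta> where "\<delta> = (\<sigma> - v) powr \<gamma> / 2"
  define E where "E = exp (- bigH h v - 2 * M)"
  have w: "v \<le> v + \<delta>" "v + \<delta> < \<sigma>" "bigH h (v + \<delta>) \<le> bigH h v + 2 * M"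
    using bigH_increment_near_sigma[OF assms] by (auto simp: \<delta>_def)
  have pos: "0 < \<delta> * E ^ 2"
    using assms by (simp add: \<delta>_def E_def)
  have "\<delta> * E ^ 2 \<le> \<delta> * exp (- bigH h (v + \<delta>)) ^ 2"
    using w(3) by (auto simp: E_def \<delta>_def intro!: mult_left_mono power_mono)
  also have "\<dots> \<le> tail (psi h v)"
    using tail_psi_ge[of v "v + \<delta>"] w assms by simp
  finally have "1 / sqrt (tail (psi h v)) \<le> 1 / sqrt (\<delta> * E ^ 2)"
    using pos by (intro divide_left_mono real_sqrt_le_mono mult_pos_pos) auto
  also have "\<dots> = sqrt 2 * exp (2 * M) * ((\<sigma> - v) powr (- \<gamma> / 2) * exp (bigH h v))"
    using assms
    by (simp add: \<delta>_def E_def real_sqrt_mult real_sqrt_divide powr_half_sqrt_powr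
        powr_minus_divide exp_diff exp_minus field_simps)
  finally show ?thesis .
qed

lemma inverse_sqrt_tail_le_majorant:
  assumes "1 \<le> \<gamma>" "\<gamma> \<le> 2" "0 < v\<^sub>0" "v\<^sub>0 < \<sigma>" "\<sigma> - v\<^sub>0 \<le> 1"
    and bound: "\<And>s. v\<^sub>0 \<le> s \<Longrightarrow> s < \<sigma> \<Longrightarrow> (\<sigma> - s) powr \<gamma> * h s \<le> M"
  obtains K where "\<And>t. t \<in> {0<..<bigL h \<sigma>} \<Longrightarrow>
    1 / sqrt (tail t) \<le> K * ((\<sigma> - psi_inv t) powr (- \<gamma> / 2) * exp (bigH h (psi_inv t)))"
proof
  define K where "K = max (sqrt 2 * exp (2 * M)) (\<sigma> powr (\<gamma> / 2) / sqrt (tail (psi h v\<^sub>0)))"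
  fix t assume t: "t \<in> {0<..<bigL h \<sigma>}"
  define v where "v = psi_inv t"
  have v: "0 < v" "v < \<sigma>" "psi h v = t"
    using t psi_inv_pos psi_inv_less_sigma psi_psi_inv by (auto simp: v_def)
  have "1 / sqrt (tail t) \<le> K * ((\<sigma> - v) powr (- \<gamma> / 2) * exp (bigH h v))"
  proof (cases "v\<^sub>0 \<le> v")
    case True
    then have "1 / sqrt (tail t) \<le> sqrt 2 * exp (2 * M) * ((\<sigma> - v) powr (- \<gamma> / 2) * exp (bigH h v))"
      using inverse_sqrt_tail_near_sigma[of \<gamma> v M] assms v by fastforce
    also have "\<dots> \<le> K * ((\<sigma> - v) powr (- \<gamma> / 2) * exp (bigH h v))"
      by (intro mult_right_mono) (auto simp: K_def)
    finally show ?thesis .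
  next
    case False
    have "\<sigma> powr (- \<gamma> / 2) \<le> (\<sigma> - v) powr (- \<gamma> / 2)"
      using v assms by (intro powr_mono2') auto
    also have "\<dots> \<le> (\<sigma> - v) powr (- \<gamma> / 2) * exp (bigH h v)"
      using bigH_nonneg[of v] v by simp
    finally have majorant_ge: "\<sigma> powr (- \<gamma> / 2) \<le> (\<sigma> - v) powr (- \<gamma> / 2) * exp (bigH h v)" .
    have "tail (psi h v\<^sub>0) \<le> tail t"
      using False v assms psi_mono[of v v\<^sub>0] psi_mono[of v\<^sub>0 \<sigma>] psi_mono[of 0 v]
      by (intro tail_antimono) (auto simp: bigL_def)
    then have "1 / sqrt (tail t) \<le> 1 / sqrt (tail (psi h v\<^sub>0))"
      using tail_pos[of "psi h v\<^sub>0"] psi_mono[of 0 v\<^sub>0] strict_mono_onD[OF strict_mono_on_psi, of v\<^sub>0 \<sigma>] assms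
      by (intro divide_left_mono real_sqrt_le_mono mult_pos_pos) (auto simp: bigL_def)
    also have "\<dots> = \<sigma> powr (\<gamma> / 2) / sqrt (tail (psi h v\<^sub>0)) * \<sigma> powr (- \<gamma> / 2)"
      using sigma_pos by (simp add: powr_minus field_simps)
    also have "\<dots> \<le> K * \<sigma> powr (- \<gamma> / 2)"
      by (intro mult_right_mono) (auto simp: K_def)
    also have "\<dots> \<le> K * ((\<sigma> - v) powr (- \<gamma> / 2) * exp (bigH h v))"
      using majorant_ge by (intro mult_left_mono) (simp_all add: K_def le_max_iff_disj)
    finally show ?thesis .
  qed
  then show "1 / sqrt (tail t) \<le> K * ((\<sigma> - psi_inv t) powr (- \<gamma> / 2) * exp (bigH h (psi_inv t)))"
    by (simp add: v_def)
qed

lemma psi_inv_majorant_integrable: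
  assumes "\<gamma> < 2"
  shows "(\<lambda>t. (\<sigma> - psi_inv t) powr (- \<gamma> / 2) * exp (bigH h (psi_inv t)))
    integrable_on {0..bigL h \<sigma>}"
proof -
  define e where "e = 1 - \<gamma> / 2"
  have e: "0 < e" "e - 1 = - \<gamma> / 2"
    using assms by (auto simp: e_def)
  define \<Psi> where "\<Psi> t = - ((\<sigma> - psi_inv t) powr e) / e" for t
  have "continuous_on {0..bigL h \<sigma>} \<Psi>"
    unfolding \<Psi>_def using continuous_on_psi_inv psi_inv_in e
    by (auto intro!: continuous_intros continuous_on_powr')
  moreover have "(\<Psi> has_vector_derivative
      (\<sigma> - psi_inv t) powr (- \<gamma> / 2) * exp (bigH h (psi_inv t))) (at t)"
    if t: "t \<in> {0<..<bigL h \<sigma>}" for t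
  proof -
    have "0 < \<sigma> - psi_inv t"
      using t psi_inv_less_sigma by auto
    then have "((\<lambda>t. (\<sigma> - psi_inv t) powr e) has_real_derivative
        e * (\<sigma> - psi_inv t) powr (e - 1) * (0 - exp (bigH h (psi_inv t)))) (at t)"
      using t by (intro DERIV_chain2[OF has_real_derivative_powr] DERIV_diff DERIV_const
          has_real_derivative_psi_inv) auto
    then have "(\<Psi> has_real_derivative
        - (e * (\<sigma> - psi_inv t) powr (e - 1) * (0 - exp (bigH h (psi_inv t)))) / e) (at t)"
      unfolding \<Psi>_def by (intro DERIV_cdivide DERIV_minus)
    then show ?thesis
      using e by (simp add: has_real_derivative_iff_has_vector_derivative)
  qed
  ultimately have "((\<lambda>t. (\<sigma> - psi_inv t) powr (- \<gamma> / 2) * exp (bigH h (psi_inv t)))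
      has_integral \<Psi> (bigL h \<sigma>) - \<Psi> 0) {0..bigL h \<sigma>}"
    using bigL_pos by (intro fundamental_theorem_of_calculus_interior) auto
  then show ?thesis
    by (rule has_integral_integrable)
qed

lemma inverse_sqrt_tail_integrable:
  assumes "1 \<le> \<gamma>" "\<gamma> < 2"
    and "eventually (\<lambda>s. (\<sigma> - s) powr \<gamma> * h s \<le> M) (at_left \<sigma>)"
  shows "(\<lambda>t. 1 / sqrt (tail t)) integrable_on {0..bigL h \<sigma>}"
proof -
  obtain v\<^sub>0 where "max 0 (\<sigma> - 1) < v\<^sub>0" "v\<^sub>0 < \<sigma>"
    and "\<And>s. v\<^sub>0 \<le> s \<Longrightarrow> s < \<sigma> \<Longrightarrow> (\<sigma> - s) powr \<gamma> * h s \<le> M"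
    using eventually_at_left_Ico_witness[OF assms(3), of "max 0 (\<sigma> - 1)"] sigma_pos by auto
  then obtain K where K: "\<And>t. t \<in> {0<..<bigL h \<sigma>} \<Longrightarrow>
      1 / sqrt (tail t) \<le> K * ((\<sigma> - psi_inv t) powr (- \<gamma> / 2) * exp (bigH h (psi_inv t)))"
    using inverse_sqrt_tail_le_majorant[of \<gamma> v\<^sub>0 M] assms by force
  show ?thesis
  proof (rule integrable_on_Icc_if_dominated_on_open)
    have "continuous_on {0<..<bigL h \<sigma>} tail"
      by (rule continuous_on_subset[OF continuous_on_tail]) auto
    moreover have "\<forall>t\<in>{0<..<bigL h \<sigma>}. sqrt (tail t) \<noteq> 0"
      using tail_pos[OF less_imp_le] by fastforce
    ultimately show "continuous_on {0<..<bigL h \<sigma>} (\<lambda>t. 1 / sqrt (tail t))"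
      by (intro continuous_intros)
    show "(\<lambda>t. K * ((\<sigma> - psi_inv t) powr (- \<gamma> / 2) * exp (bigH h (psi_inv t))))
        integrable_on {0..bigL h \<sigma>}"
      using integrable_on_cmult_left[OF psi_inv_majorant_integrable[OF assms(2)], of K] by simp
    show "\<bar>1 / sqrt (tail t)\<bar>
        \<le> K * ((\<sigma> - psi_inv t) powr (- \<gamma> / 2) * exp (bigH h (psi_inv t)))"
      if "t \<in> {0<..<bigL h \<sigma>}" for t
      using K[OF that] tail_nonneg[of t] that by simp
  qed
qed

end

theorem lemma4p1:
  fixes h :: "real \<Rightarrow> real" and \<sigma> \<gamma> C :: real
  assumes sigma_pos: "\<sigma> > 0"
    and h_cont: "continuous_on {0..<\<sigma>} h"
    and h_pos: "\<forall>s\<in>{0..<\<sigma>}. h s > 0"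
    and h_strict_mono: "strict_mono_on {0..<\<sigma>} h"
    and h_infty: "filterlim h at_top (at_left \<sigma>)"
    and gamma: "1 \<le> \<gamma>" "\<gamma> < 2"
    and C_pos: "C > 0"
    and h_asymp: "((\<lambda>s. (\<sigma> - s) powr \<gamma> * h s) \<longlongrightarrow> C) (at_left \<sigma>)"
  shows "(gfun h \<sigma> 0 = 1 \<and> gfun h \<sigma> (bigL h \<sigma>) = 0)
    \<and> (\<forall>x\<in>{0..bigL h \<sigma>}. \<forall>y\<in>{0..bigL h \<sigma>}. x \<le> y \<longrightarrow> gfun h \<sigma> y \<le> gfun h \<sigma> x)
    \<and> ((\<forall>s\<in>{0<..<bigL h \<sigma>}. gfun h \<sigma> differentiable (at s))
         \<and> filterlim (deriv (gfun h \<sigma>)) at_bot (at_left (bigL h \<sigma>)))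
    \<and> ((\<lambda>t. 1 / sqrt (integral {t..bigL h \<sigma>} (gfun h \<sigma>))) integrable_on {0..bigL h \<sigma>})"
proof -
  interpret increasing_rate h \<sigma>
    using sigma_pos h_cont h_pos strict_mono_on_imp_mono_on[OF h_strict_mono]
    by unfold_locales auto
  have "eventually (\<lambda>s. (\<sigma> - s) powr \<gamma> * h s < 2 * C) (at_left \<sigma>)"
    using order_tendstoD(2)[OF h_asymp] C_pos by simp
  then have "eventually (\<lambda>s. (\<sigma> - s) powr \<gamma> * h s \<le> 2 * C) (at_left \<sigma>)"
    by (rule eventually_mono) simp
  then have "(\<lambda>t. 1 / sqrt (tail t)) integrable_on {0..bigL h \<sigma>}"
    using gamma by (intro inverse_sqrt_tail_integrable) auto
  then show ?thesis
    using gfun_0 gfun_bigL gfun_antimono has_real_derivative_gfun deriv_gfun_tendsto_at_bot[OF h_infty]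
    by (fastforce simp: tail_def real_differentiable_def)
qed

end
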